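(* For any real numbers $G_2,G_3$ with $G_2\neq0$ and $G_2^3-27G_3^2>0$, the polynomial $K^4-G_2K^2/2-G_3K-G_2^2/48$ has one real negative root, one real positive root, and two non-real complex conjugate roots. *)

theory Defs
  imports Complex_Main "HOL-Computational_Algebra.Polynomial"
begin

definition quartic :: "real \<Rightarrow> real \<Rightarrow> real poly" where
  "quartic G2 G3 = [: -(G2^2/48), -G3, -(G2/2), 0, 1 :]"

end

theory Submission
  imports Defs "HOL-Library.Quadratic_Discriminant"
begin

text \<open>
  Write \<open>P\<close> for the quartic. Since \<open>P(0) = -G\<^sub>2\<^sup>2/48 < 0\<close> and \<open>P\<close> is monic of even
  degree, it has real zeros \<open>a < 0 < b\<close>. The hypothesis \<open>G\<^sub>2\<^sup>3 - 27 G\<^sub>3\<^sup>2 > 0\<close> makes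
  \<open>P\<close> negative at each of its critical points. Hence \<open>P\<close> has neither a double zero nor three
  distinct real zeros: the maximum of \<open>P\<close> between the outer two of three zeros would be an
  interior critical point, with value \<open>\<ge> 0\<close>. So the monic quadratic cofactor of
  \<open>(X - a)(X - b)\<close> has no real root and splits into conjugate non-real linear factors.
\<close>

lemma real_poly_pos_at_top:
  fixes p :: "real poly"
  assumes "lead_coeff p > 0"
  shows "\<exists>x>b. poly p x > 0"
proof -
  obtain n where "\<forall>x\<ge>n. poly p x \<ge> lead_coeff p"
    using poly_pinfty_gt_lc[OF assms] by blast
  then have "poly p (max n (b + 1)) > 0"
    using assms by (meson max.cobounded1 less_le_trans)
  then show ?thesis by (intro exI[of _ "max n (b + 1)"]) auto
qed

lemma real_poly_neg_and_pos_root: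
  fixes p :: "real poly"
  assumes "poly p 0 < 0" and "lead_coeff p > 0" and "even (degree p)"
  shows "\<exists>a<0. poly p a = 0" and "\<exists>b>0. poly p b = 0"
proof -
  define q where "q = pcompose p [:0, -1:]"
  have "lead_coeff q = lead_coeff p"
    using assms(3) by (simp add: q_def lead_coeff_comp)
  then obtain x where "x > 0" "poly q x > 0"
    using real_poly_pos_at_top assms(2) by metis
  then show "\<exists>a<0. poly p a = 0"
    using poly_IVT_neg[of "-x" 0 p] assms(1) by (auto simp: q_def poly_pcompose)
  obtain y where "y > 0" "poly p y > 0"
    using real_poly_pos_at_top assms(2) by metis
  then show "\<exists>b>0. poly p b = 0"
    using poly_IVT_pos[of 0 y p] assms(1) by auto
qed

lemma poly_factor_two_roots:
  fixes p :: "'a::idom poly"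
  assumes "poly p a = 0" and "poly p b = 0" and "a \<noteq> b"
  obtains q where "p = [:-a, 1:] * [:-b, 1:] * q"
proof -
  obtain r where r: "p = [:-a, 1:] * r"
    using assms(1) by (auto simp: poly_eq_0_iff_dvd)
  with assms(2,3) have "poly r b = 0" by simp
  then obtain q where "r = [:-b, 1:] * q"
    by (auto simp: poly_eq_0_iff_dvd)
  with r that show ?thesis by (metis mult.assoc)
qed

lemma map_poly_of_real_mult:
  fixes p q :: "real poly"
  shows "(map_poly of_real (p * q) :: 'a::{real_algebra_1, comm_ring_1} poly)
    = map_poly of_real p * map_poly of_real q"
  by (intro poly_eqI) (simp add: coeff_map_poly coeff_mult)

lemma poly_pderiv_at_root_of_factor:
  fixes a b :: "'a::idom"
  shows "poly (pderiv ([:-a, 1:] * [:-b, 1:] * q)) a = (a - b) * poly q a"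
  unfolding pderiv_mult poly_add poly_mult by (simp add: pderiv_pCons)

lemma no_three_zeros_if_critical_values_neg:
  fixes P P' :: "real \<Rightarrow> real"
  assumes deriv: "\<And>x. (P has_real_derivative P' x) (at x)"
    and critical: "\<And>c. P' c = 0 \<Longrightarrow> P c < 0"
    and "x < y" "y < w" and "P x = 0" "P y = 0" "P w = 0"
  shows False
proof -
  have interior_max_critical: "P' m = 0"
    if "x < m" "m < w" "\<And>t. t \<in> {x..w} \<Longrightarrow> P t \<le> P m" for m
  proof (rule DERIV_local_max[OF deriv, of "min (m - x) (w - m)"])
    show "\<forall>t. \<bar>m - t\<bar> < min (m - x) (w - m) \<longrightarrow> P t \<le> P m"
      using that(3) by (auto simp: abs_less_iff)
  qed (use that in simp)
  have cont: "continuous_on {x..w} P"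
    using deriv by (meson DERIV_isCont continuous_at_imp_continuous_on)
  obtain m where m: "m \<in> {x..w}" "\<And>t. t \<in> {x..w} \<Longrightarrow> P t \<le> P m"
    using continuous_attains_sup[OF compact_Icc _ cont] assms(3,4) by auto
  have "P m \<le> 0"
  proof (rule ccontr)
    assume "\<not> P m \<le> 0"
    with m(1) assms(5,7) have "x < m" "m < w" by (auto simp: less_le)
    then have "P' m = 0" using m(2) by (rule interior_max_critical)
    with critical \<open>\<not> P m \<le> 0\<close> show False by fastforce
  qed
  have "P' y = 0"
    using assms(3,4) by (rule interior_max_critical) (use m(2) \<open>P m \<le> 0\<close> assms(6) in force)
  with critical assms(6) show False by fastforce
qed

lemma cofactor_no_real_root_if_critical_values_neg:
  fixes p q :: "real poly"
  assumes critical: "\<And>c. poly (pderiv p) c = 0 \<Longrightarrow> poly p c < 0"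
    and p: "p = [:-a, 1:] * [:-b, 1:] * q"
  shows "poly q r \<noteq> 0"
proof
  assume "poly q r = 0"
  then have zeros: "poly p a = 0" "poly p b = 0" "poly p r = 0"
    unfolding p poly_mult by simp_all
  then have "poly (pderiv p) a \<noteq> 0" "poly (pderiv p) b \<noteq> 0"
    using critical by fastforce+
  moreover have "p = [:-b, 1:] * [:-a, 1:] * q"
    using p by (simp add: ac_simps)
  ultimately have distinct: "a \<noteq> b" "r \<noteq> a" "r \<noteq> b"
    using \<open>poly q r = 0\<close> poly_pderiv_at_root_of_factor[of a b q] poly_pderiv_at_root_of_factor[of b a q]
    by (auto simp: p)
  have no_three: False
    if "x < y" "y < w" "poly p x = 0" "poly p y = 0" "poly p w = 0" for x y w
    using no_three_zeros_if_critical_values_neg[OF poly_DERIV critical that] .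
  show False
    using distinct no_three[OF _ _ zeros(1,2,3)] no_three[OF _ _ zeros(1,3,2)]
      no_three[OF _ _ zeros(2,1,3)] no_three[OF _ _ zeros(2,3,1)]
      no_three[OF _ _ zeros(3,1,2)] no_three[OF _ _ zeros(3,2,1)]
    by linarith
qed

lemma monic_quadratic_conjugate_roots:
  fixes q :: "real poly"
  assumes "degree q = 2" and "lead_coeff q = 1" and no_root: "\<And>x. poly q x \<noteq> 0"
  shows "\<exists>z. Im z \<noteq> 0 \<and> map_poly complex_of_real q = [:-z, 1:] * [:-cnj z, 1:]"
proof -
  define u v where "u = coeff q 1" and "v = coeff q 0"
  have q: "q = [:v, u, 1:]"
  proof (rule poly_eqI)
    fix n show "coeff q n = coeff [:v, u, 1:] n"
      using assms(1,2) coeff_eq_0[of q n]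
      by (cases "n > 2") (auto simp: u_def v_def coeff_pCons numeral_2_eq_2 less_Suc_eq split: nat.split)
  qed
  have "discrim 1 u v < 0"
    using discriminant_nonneg_ex[of 1 u v] no_root by (force simp: q algebra_simps power2_eq_square)
  then have "u^2 < 4 * v" by (simp add: discrim_def)
  define z where "z = Complex (-u/2) (sqrt (4*v - u^2)/2)"
  have "Im z \<noteq> 0" using \<open>u^2 < 4 * v\<close> by (simp add: z_def)
  moreover have "Re z ^ 2 + Im z ^ 2 = v"
    using \<open>u^2 < 4 * v\<close> by (simp add: z_def power_divide algebra_simps add_divide_distrib[symmetric])
  then have "map_poly complex_of_real q = [:-z, 1:] * [:-cnj z, 1:]"
    by (simp add: q z_def map_poly_pCons complex_eq_iff power2_eq_square)
  ultimately show ?thesis by blast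
qed

lemma quartic_critical_value_neg:
  fixes G2 G3 c :: real
  assumes "G2^3 - 27 * G3^2 > 0" and "poly (pderiv (quartic G2 G3)) c = 0"
  shows "poly (quartic G2 G3) c < 0"
proof -
  have critical: "4*c^3 - G2*c - G3 = 0"
    using assms(2) by (simp add: quartic_def pderiv_pCons algebra_simps power2_eq_square power3_eq_cube)
  have "G2^3 > 0"
    using assms(1) by (smt (verit) zero_le_power2)
  then have "G2 > 0" by (simp add: zero_less_power_eq)
  have "12*G2*(12*G2*c^2 + 36*G3*c + G2^2) = (12*G2*c + 18*G3)^2 + 12*(G2^3 - 27*G3^2)"
    by (simp add: algebra_simps power2_eq_square power3_eq_cube)
  also have "\<dots> > 0" using assms(1) by (simp add: add_nonneg_pos)
  finally have "12*G2*c^2 + 36*G3*c + G2^2 > 0"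
    using \<open>G2 > 0\<close> by (simp add: zero_less_mult_iff)
  moreover have "poly (quartic G2 G3) c = c/4 * (4*c^3 - G2*c - G3) - (12*G2*c^2 + 36*G3*c + G2^2)/48"
    by (simp add: quartic_def field_simps power2_eq_square power3_eq_cube power4_eq_xxxx)
  ultimately show ?thesis using critical by simp
qed

theorem lemma23:
  fixes G2 G3 :: real
  assumes "G2 \<noteq> 0" and "G2^3 - 27 * G3^2 > 0"
  shows "\<exists>a b :: real. \<exists>z :: complex. a < 0 \<and> 0 < b \<and> Im z \<noteq> 0 \<and>
           map_poly complex_of_real (quartic G2 G3) =
             [:- complex_of_real a, 1:] * [:- complex_of_real b, 1:] * [:- z, 1:] * [:- cnj z, 1:]"
proof -
  let ?p = "quartic G2 G3"
  have p: "degree ?p = 4" "lead_coeff ?p = 1" "poly ?p 0 < 0"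
    using assms(1) by (simp_all add: quartic_def)
  then obtain a b where ab: "a < 0" "poly ?p a = 0" "0 < b" "poly ?p b = 0"
    using real_poly_neg_and_pos_root[of ?p] by auto
  then obtain q where q: "?p = [:-a, 1:] * [:-b, 1:] * q"
    by (metis poly_factor_two_roots less_asym)
  then have "q \<noteq> 0" using p(1) by auto
  then have "degree q = 2"
    using p(1) unfolding q by (simp add: degree_mult_eq del: mult_pCons_left mult_pCons_right)
  moreover have "lead_coeff q = 1"
    using p(2) unfolding q lead_coeff_mult by simp
  moreover have "poly q x \<noteq> 0" for x
    using cofactor_no_real_root_if_critical_values_neg[OF quartic_critical_value_neg[OF assms(2)] q] .
  ultimately obtain z where "Im z \<noteq> 0" and z: "map_poly complex_of_real q = [:-z, 1:] * [:-cnj z, 1:]"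
    using monic_quadratic_conjugate_roots by blast
  have "map_poly complex_of_real ?p
      = [:- complex_of_real a, 1:] * [:- complex_of_real b, 1:] * map_poly complex_of_real q"
    unfolding q map_poly_of_real_mult by (simp add: map_poly_pCons)
  with z ab(1,3) \<open>Im z \<noteq> 0\<close> show ?thesis
    by (metis mult.assoc)
qed

end
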